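(* Let $n\ge 1$ and let $\|\cdot\|$ be a norm on $\mathbb{R}^n$ that is $C^\infty$ on $\mathbb{R}^n\setminus\{0\}$. Let $G^n$ be the group (under composition, $\mathbf{Y}_{g_1g_2}=\mathbf{Y}_{g_1}\circ\mathbf{Y}_{g_2}$) of all $C^\infty$ diffeomorphisms $\mathbf{Y}:\mathbb{R}^n\setminus\{0\}\to\mathbb{R}^n\setminus\{0\}$ with $\mathbf{Y}(\lambda\mathbf{x})=\lambda\mathbf{Y}(\mathbf{x})$ for all $\mathbf{x}\ne0$ and $\lambda\in\mathbb{R}\setminus\{0\}$. Let $N^n\subset G^n$ consist of the elements with $\mathbf{Y}_g(\mathbf{x})=\mathbf{x}\,r_g(\mathbf{x})$, where $r_g:\mathbb{R}^n\setminus\{0\}\to(0,\infty)$ is $C^\infty$ with $r_g(\lambda\mathbf{x})=r_g(\mathbf{x})$ for all $\lambda\in\mathbb{R}\setminus\{0\}$, and let $H^n\subset G^n$ consist of the elements $h$ with $\|\mathbf{Y}_h(\mathbf{x})\|=\|\mathbf{x}\|$ and $\mathbf{Y}_h(-\mathbf{x})=-\mathbf{Y}_h(\mathbf{x})$ for all $\mathbf{x}\ne0$. Then $G^n$ is the (internal) semidirect product $G^n=N^n\rtimes H^n$ of the abelian normal subgroup $N^n$ and the subgroup $H^n$: that is, $N^n$ is an abelian normal subgroup, $H^n$ is a subgroup, $N^n\cap H^n=\{e\}$ and $G^n=N^nH^n$.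
   Context: $G^n$ is the group of Thermodynamic Coordinate Transformations (homogeneous degree-one diffeomorphisms of $\mathbb{R}^n\setminus\{0\}$); elements are identified with their maps and the group law is composition. *)

theory Defs
  imports "HOL-Analysis.Analysis" "HOL-Algebra.Algebra"
begin

text \<open>C-infinity on an open set S: there is a family D of iterated directional
derivatives, D [] = f on S, and for every list vs and x in S the map D vs is
Frechet differentiable at x with derivative v |-> D (v # vs) x.
(Existence of Frechet derivatives of every order; continuity follows.)\<close>
definition smooth_on :: "('a::real_normed_vector) set \<Rightarrow> ('a \<Rightarrow> 'b::real_normed_vector) \<Rightarrow> bool" where
  "smooth_on S f \<longleftrightarrow> open S \<and>
     (\<exists>D :: 'a list \<Rightarrow> 'a \<Rightarrow> 'b.
        (\<forall>x\<in>S. D [] x = f x) \<and>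
        (\<forall>vs. \<forall>x\<in>S. (D vs has_derivative (\<lambda>v. D (v # vs) x)) (at x)))"

definition punctured :: "'a::real_normed_vector set" where
  "punctured = - {0}"

definition diffeo_on :: "('a::real_normed_vector) set \<Rightarrow> ('a \<Rightarrow> 'a) \<Rightarrow> bool" where
  "diffeo_on S Y \<longleftrightarrow> bij_betw Y S S \<and> smooth_on S Y \<and> smooth_on S (inv_into S Y)"

text \<open>Carrier of G^n: homogeneous degree-one C-infinity diffeomorphisms of R^n minus 0,
 extended by Y 0 = 0 so that elements are identified with total maps.\<close>
definition TCT :: "('a::real_normed_vector \<Rightarrow> 'a) set" where
  "TCT = {Y. diffeo_on punctured Y \<and> Y 0 = 0 \<and>
           (\<forall>x lam. x \<noteq> 0 \<longrightarrow> lam \<noteq> 0 \<longrightarrow> Y (lam *\<^sub>R x) = lam *\<^sub>R Y x)}"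

definition TCT_group :: "('a::real_normed_vector \<Rightarrow> 'a) monoid" where
  "TCT_group = \<lparr>carrier = TCT, mult = (\<circ>), one = id\<rparr>"

definition TCT_N :: "('a::real_normed_vector \<Rightarrow> 'a) set" where
  "TCT_N = {Y \<in> TCT. \<exists>r :: 'a \<Rightarrow> real. smooth_on punctured r \<and>
              (\<forall>x. x \<noteq> 0 \<longrightarrow> r x > 0) \<and>
              (\<forall>x lam. x \<noteq> 0 \<longrightarrow> lam \<noteq> 0 \<longrightarrow> r (lam *\<^sub>R x) = r x) \<and>
              (\<forall>x. x \<noteq> 0 \<longrightarrow> Y x = r x *\<^sub>R x)}"

definition TCT_H :: "('a::real_normed_vector \<Rightarrow> real) \<Rightarrow> ('a \<Rightarrow> 'a) set" where
  "TCT_H nrm = {Y \<in> TCT. \<forall>x. x \<noteq> 0 \<longrightarrow> nrm (Y x) = nrm x \<and> Y (- x) = - Y x}"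

definition is_norm :: "('a::real_vector \<Rightarrow> real) \<Rightarrow> bool" where
  "is_norm nrm \<longleftrightarrow> (\<forall>x. nrm x = 0 \<longleftrightarrow> x = 0) \<and> (\<forall>c x. nrm (c *\<^sub>R x) = \<bar>c\<bar> * nrm x)
      \<and> (\<forall>x y. nrm (x + y) \<le> nrm x + nrm y)"

end

theory Submission
  imports Defs
begin

text \<open>An element of \<open>N\<close> is a radial rescaling \<open>x \<mapsto> r x \<cdot> x\<close> by a positive factor that is
  constant on lines; two such rescalings compose to the rescaling by the product of the factors,
  so \<open>N\<close> is abelian, and \<open>Y \<circ> (r \<cdot> id) \<circ> Y\<^sup>-\<^sup>1\<close> is the rescaling by \<open>r \<circ> Y\<^sup>-\<^sup>1\<close> because \<open>Y\<close> is
  homogeneous, so \<open>N\<close> is normal. A rescaling preserving a norm is the identity. Finally any \<open>Y\<close>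
  becomes norm-preserving after radially rescaling \<open>Y x\<close> back to the norm of \<open>x\<close>, which gives
  \<open>G = N H\<close>. The analytic content is that all maps involved are smooth; for the definition of
  smoothness through families of iterated derivatives this is a small coinductive calculus.\<close>

section \<open>Smooth maps\<close>

lemma smooth_on_open: "smooth_on S f \<Longrightarrow> open S"
  by (simp add: smooth_on_def)

lemma smooth_on_cong:
  assumes "smooth_on S f" "\<And>x. x \<in> S \<Longrightarrow> f x = g x"
  shows "smooth_on S g"
  using assms unfolding smooth_on_def by metis

lemma smooth_on_derivative:
  assumes "smooth_on S f"
  obtains G where "\<And>x. x \<in> S \<Longrightarrow> (f has_derivative G x) (at x)" "\<And>v. smooth_on S (\<lambda>x. G x v)"
proof -
  from assms obtain D where S: "open S" and D0: "\<forall>x\<in>S. D [] x = f x"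
    and D: "\<forall>vs. \<forall>x\<in>S. (D vs has_derivative (\<lambda>v. D (v # vs) x)) (at x)"
    unfolding smooth_on_def by blast
  show thesis
  proof
    fix x assume "x \<in> S"
    then show "(f has_derivative (\<lambda>v. D [v] x)) (at x)"
      using has_derivative_transform_within_open[of "D []" _ x _ S f] S D D0 by simp
  next
    fix v
    show "smooth_on S (\<lambda>x. D [v] x)"
      unfolding smooth_on_def using S D by (intro conjI exI[of _ "\<lambda>ws. D (ws @ [v])"]) auto
  qed
qed

text \<open>Smoothness is a greatest fixed point: a class of functions that is closed under taking
  directional derivatives consists of smooth functions. The iterated derivatives are built by
  primitive recursion on the list of directions from a choice function for the closure property.\<close>

lemma smooth_on_coinduct:
  assumes S: "open S" and "P f"
    and step: "\<And>g. P g \<Longrightarrow> \<exists>G. (\<forall>x\<in>S. (g has_derivative G x) (at x)) \<and>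
                              (\<forall>v. \<exists>h. P h \<and> (\<forall>x\<in>S. h x = G x v))"
  shows "smooth_on S f"
proof -
  obtain G where G: "\<And>g. P g \<Longrightarrow> \<forall>x\<in>S. (g has_derivative G g x) (at x)"
    and G': "\<And>g. P g \<Longrightarrow> \<forall>v. \<exists>h. P h \<and> (\<forall>x\<in>S. h x = G g x v)"
    using step by metis
  obtain H where H: "\<And>g v. P g \<Longrightarrow> P (H g v) \<and> (\<forall>x\<in>S. H g v x = G g x v)"
    using G' by metis
  define D where "D = rec_list f (\<lambda>v vs d. H d v)"
  have D_Cons: "D (v # vs) = H (D vs) v" for v vs
    by (simp add: D_def)
  have P_D: "P (D vs)" for vs
    by (induction vs) (simp_all add: D_def \<open>P f\<close> H)
  show ?thesis
    unfolding smooth_on_def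
  proof (intro conjI S exI[of _ D] ballI allI)
    fix vs x assume x: "x \<in> S"
    have "G (D vs) x = (\<lambda>v. D (v # vs) x)"
      using H[OF P_D] x by (simp add: D_Cons fun_eq_iff)
    then show "(D vs has_derivative (\<lambda>v. D (v # vs) x)) (at x)"
      using G[OF P_D] x by metis
  qed (simp add: D_def)
qed

definition derivative_in_sums :: "'a::real_normed_vector set \<Rightarrow> (('a \<Rightarrow> 'b::real_normed_vector) \<Rightarrow> bool) \<Rightarrow> ('a \<Rightarrow> 'b) \<Rightarrow> bool" where
  "derivative_in_sums S P g \<longleftrightarrow>
     (\<exists>G. (\<forall>x\<in>S. (g has_derivative G x) (at x)) \<and>
          (\<forall>v. \<exists>ks. list_all P ks \<and> (\<forall>x\<in>S. G x v = (\<Sum>k\<leftarrow>ks. k x))))"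

lemma derivative_in_sums_sum_list:
  assumes "list_all (derivative_in_sums S P) hs"
  shows "derivative_in_sums S P (\<lambda>x. \<Sum>h\<leftarrow>hs. h x)"
  using assms
proof (induction hs)
  case Nil
  show ?case
    unfolding derivative_in_sums_def by (intro exI[of _ "\<lambda>x v. 0"] conjI allI exI[of _ "[]"]) auto
next
  case (Cons h hs)
  obtain G1 where G1: "\<forall>x\<in>S. (h has_derivative G1 x) (at x)"
    "\<forall>v. \<exists>ks. list_all P ks \<and> (\<forall>x\<in>S. G1 x v = (\<Sum>k\<leftarrow>ks. k x))"
    using Cons.prems unfolding derivative_in_sums_def by auto
  obtain G2 where G2: "\<forall>x\<in>S. ((\<lambda>x. \<Sum>h\<leftarrow>hs. h x) has_derivative G2 x) (at x)"
    "\<forall>v. \<exists>ks. list_all P ks \<and> (\<forall>x\<in>S. G2 x v = (\<Sum>k\<leftarrow>ks. k x))"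
    using Cons unfolding derivative_in_sums_def by auto
  show ?case
    unfolding derivative_in_sums_def
  proof (intro exI[of _ "\<lambda>x v. G1 x v + G2 x v"] conjI ballI allI)
    fix x assume "x \<in> S"
    then show "((\<lambda>x. \<Sum>h\<leftarrow>h # hs. h x) has_derivative (\<lambda>v. G1 x v + G2 x v)) (at x)"
      using G1 G2 by (simp add: has_derivative_add)
  next
    fix v
    obtain ks1 ks2 where "list_all P ks1" "\<forall>x\<in>S. G1 x v = (\<Sum>k\<leftarrow>ks1. k x)"
      "list_all P ks2" "\<forall>x\<in>S. G2 x v = (\<Sum>k\<leftarrow>ks2. k x)"
      using G1(2) G2(2) by metis
    then show "\<exists>ks. list_all P ks \<and> (\<forall>x\<in>S. G1 x v + G2 x v = (\<Sum>k\<leftarrow>ks. k x))"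
      by (intro exI[of _ "ks1 @ ks2"]) auto
  qed
qed

text \<open>The Leibniz and chain rules produce sums, so closure of the class under differentiation is
  only required up to finite sums.\<close>

lemma smooth_on_coinduct_sums:
  assumes S: "open S" and "P f" and step: "\<And>g. P g \<Longrightarrow> derivative_in_sums S P g"
  shows "smooth_on S f"
proof (rule smooth_on_coinduct[where P="\<lambda>g. \<exists>hs. list_all P hs \<and> (\<forall>x\<in>S. g x = (\<Sum>h\<leftarrow>hs. h x))", OF S])
  show "\<exists>hs. list_all P hs \<and> (\<forall>x\<in>S. f x = (\<Sum>h\<leftarrow>hs. h x))"
    using \<open>P f\<close> by (intro exI[of _ "[f]"]) simp
next
  fix g assume "\<exists>hs. list_all P hs \<and> (\<forall>x\<in>S. g x = (\<Sum>h\<leftarrow>hs. h x))"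
  then obtain hs where hs: "list_all P hs" "\<forall>x\<in>S. g x = (\<Sum>h\<leftarrow>hs. h x)"
    by blast
  have "list_all (derivative_in_sums S P) hs"
    using hs(1) step by (simp add: list_all_iff)
  then obtain G where G: "\<forall>x\<in>S. ((\<lambda>x. \<Sum>h\<leftarrow>hs. h x) has_derivative G x) (at x)"
    "\<forall>v. \<exists>ks. list_all P ks \<and> (\<forall>x\<in>S. G x v = (\<Sum>k\<leftarrow>ks. k x))"
    using derivative_in_sums_sum_list unfolding derivative_in_sums_def by blast
  show "\<exists>G. (\<forall>x\<in>S. (g has_derivative G x) (at x)) \<and>
          (\<forall>v. \<exists>h. (\<exists>hs. list_all P hs \<and> (\<forall>x\<in>S. h x = (\<Sum>h\<leftarrow>hs. h x))) \<and> (\<forall>x\<in>S. h x = G x v))"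
  proof (intro exI[of _ G] conjI ballI allI)
    fix x assume "x \<in> S"
    then show "(g has_derivative G x) (at x)"
      using has_derivative_transform_within_open[of "\<lambda>x. \<Sum>h\<leftarrow>hs. h x" _ x _ S g] G(1) hs(2) S
      by simp
  next
    fix v
    show "\<exists>h. (\<exists>hs. list_all P hs \<and> (\<forall>x\<in>S. h x = (\<Sum>h\<leftarrow>hs. h x))) \<and> (\<forall>x\<in>S. h x = G x v)"
      using G(2) by (intro exI[of _ "\<lambda>x. G x v"]) auto
  qed
qed

lemma smooth_on_const: "open S \<Longrightarrow> smooth_on S (\<lambda>x. c)"
  by (rule smooth_on_coinduct[where P="\<lambda>g. \<exists>c. g = (\<lambda>x. c)"]) (auto intro!: exI[of _ "\<lambda>x v. 0"])

lemma smooth_on_ident: "open S \<Longrightarrow> smooth_on S (\<lambda>x. x)"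
proof (rule smooth_on_coinduct[where P="\<lambda>g. g = (\<lambda>x. x) \<or> (\<exists>c. g = (\<lambda>x. c))"])
  fix g :: "'a \<Rightarrow> 'a" assume "g = (\<lambda>x. x) \<or> (\<exists>c. g = (\<lambda>x. c))"
  then show "\<exists>G. (\<forall>x\<in>S. (g has_derivative G x) (at x)) \<and>
      (\<forall>v. \<exists>h. (h = (\<lambda>x. x) \<or> (\<exists>c. h = (\<lambda>x. c))) \<and> (\<forall>x\<in>S. h x = G x v))"
  proof (elim disjE exE)
    assume "g = (\<lambda>x. x)"
    then show ?thesis by (intro exI[of _ "\<lambda>x v. v"]) auto
  next
    fix c assume "g = (\<lambda>x. c)"
    then show ?thesis by (intro exI[of _ "\<lambda>x v. 0"]) auto
  qed
qed auto

lemma smooth_on_bounded_linear: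
  assumes L: "bounded_linear L" and f: "smooth_on S f"
  shows "smooth_on S (\<lambda>x. L (f x))"
proof (rule smooth_on_coinduct[where P="\<lambda>g. \<exists>f. smooth_on S f \<and> g = (\<lambda>x. L (f x))"])
  fix g assume "\<exists>f. smooth_on S f \<and> g = (\<lambda>x. L (f x))"
  then obtain f where f: "smooth_on S f" and g: "g = (\<lambda>x. L (f x))"
    by blast
  obtain G where "\<And>x. x \<in> S \<Longrightarrow> (f has_derivative G x) (at x)" "\<And>v. smooth_on S (\<lambda>x. G x v)"
    using smooth_on_derivative[OF f] by blast
  then show "\<exists>G. (\<forall>x\<in>S. (g has_derivative G x) (at x)) \<and>
      (\<forall>v. \<exists>h. (\<exists>f. smooth_on S f \<and> h = (\<lambda>x. L (f x))) \<and> (\<forall>x\<in>S. h x = G x v))"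
    unfolding g by (intro exI[of _ "\<lambda>x v. L (G x v)"]) (auto intro: bounded_linear.has_derivative[OF L])
qed (use f smooth_on_open in auto)

lemma smooth_on_scaleR:
  fixes a :: "'a::real_normed_vector \<Rightarrow> real" and f :: "'a \<Rightarrow> 'b::real_normed_vector"
  assumes "smooth_on S a" and "smooth_on S f"
  shows "smooth_on S (\<lambda>x. a x *\<^sub>R f x)"
proof -
  define P where "P g \<longleftrightarrow> (\<exists>a f. smooth_on S a \<and> smooth_on S f \<and> g = (\<lambda>x. a x *\<^sub>R f x))"
    for g :: "'a \<Rightarrow> 'b"
  show ?thesis
  proof (rule smooth_on_coinduct_sums[where P=P])
    fix g assume "P g"
    then obtain a f where a: "smooth_on S a" and f: "smooth_on S f" and g: "g = (\<lambda>x. a x *\<^sub>R f x)"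
      by (auto simp: P_def)
    obtain Ga where Ga: "\<And>x. x \<in> S \<Longrightarrow> (a has_derivative Ga x) (at x)" "\<And>v. smooth_on S (\<lambda>x. Ga x v)"
      using smooth_on_derivative[OF a] by blast
    obtain Gf where Gf: "\<And>x. x \<in> S \<Longrightarrow> (f has_derivative Gf x) (at x)" "\<And>v. smooth_on S (\<lambda>x. Gf x v)"
      using smooth_on_derivative[OF f] by blast
    show "derivative_in_sums S P g"
      unfolding derivative_in_sums_def
    proof (intro exI[of _ "\<lambda>x v. a x *\<^sub>R Gf x v + Ga x v *\<^sub>R f x"] conjI ballI allI)
      fix x assume "x \<in> S"
      then show "(g has_derivative (\<lambda>v. a x *\<^sub>R Gf x v + Ga x v *\<^sub>R f x)) (at x)"
        unfolding g using Ga Gf by (auto intro: has_derivative_scaleR)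
    next
      fix v
      have "list_all P [\<lambda>x. a x *\<^sub>R Gf x v, \<lambda>x. Ga x v *\<^sub>R f x]"
        unfolding P_def using a f Ga(2) Gf(2) by auto
      then show "\<exists>ks. list_all P ks \<and> (\<forall>x\<in>S. a x *\<^sub>R Gf x v + Ga x v *\<^sub>R f x = (\<Sum>k\<leftarrow>ks. k x))"
        by (intro exI[of _ "[\<lambda>x. a x *\<^sub>R Gf x v, \<lambda>x. Ga x v *\<^sub>R f x]"]) simp
    qed
  qed (use assms smooth_on_open in \<open>auto simp: P_def\<close>)
qed

lemma smooth_on_mult:
  fixes a b :: "'a::real_normed_vector \<Rightarrow> real"
  shows "smooth_on S a \<Longrightarrow> smooth_on S b \<Longrightarrow> smooth_on S (\<lambda>x. a x * b x)"
  using smooth_on_scaleR[of S a b] by simp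

text \<open>The class closed under differentiation is that of the functions \<open>b / a ^ k\<close> with
  \<open>b\<close> smooth: \<open>(b / a ^ k)' = b' / a ^ k - k b a' / a ^ (k + 1)\<close>.\<close>

lemma smooth_on_inverse:
  fixes a :: "'a::real_normed_vector \<Rightarrow> real"
  assumes a: "smooth_on S a" and nz: "\<And>x. x \<in> S \<Longrightarrow> a x \<noteq> 0"
  shows "smooth_on S (\<lambda>x. inverse (a x))"
proof -
  have S: "open S"
    using smooth_on_open[OF a] .
  define P where "P g \<longleftrightarrow> (\<exists>b k. smooth_on S b \<and> g = (\<lambda>x. b x * inverse (a x) ^ k))" for g
  obtain Ga where Ga: "\<And>x. x \<in> S \<Longrightarrow> (a has_derivative Ga x) (at x)" "\<And>v. smooth_on S (\<lambda>x. Ga x v)"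
    using smooth_on_derivative[OF a] by blast
  show ?thesis
  proof (rule smooth_on_coinduct_sums[where P=P, OF S])
    show "P (\<lambda>x. inverse (a x))"
      unfolding P_def using smooth_on_const[OF S, of 1] by (intro exI[of _ "\<lambda>x. 1"] exI[of _ 1]) auto
    fix g assume "P g"
    then obtain b k where b: "smooth_on S b" and g: "g = (\<lambda>x. b x * inverse (a x) ^ k)"
      by (auto simp: P_def)
    obtain Gb where Gb: "\<And>x. x \<in> S \<Longrightarrow> (b has_derivative Gb x) (at x)" "\<And>v. smooth_on S (\<lambda>x. Gb x v)"
      using smooth_on_derivative[OF b] by blast
    define G where "G x v = (- real k * b x * Ga x v) * inverse (a x) ^ Suc k + Gb x v * inverse (a x) ^ k"
      for x v
    show "derivative_in_sums S P g"
      unfolding derivative_in_sums_def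
    proof (intro exI[of _ G] conjI ballI allI)
      fix x assume x: "x \<in> S"
      have "((\<lambda>x. inverse (a x)) has_derivative (\<lambda>v. - (inverse (a x) * Ga x v * inverse (a x)))) (at x)"
        using Deriv.has_derivative_inverse[OF nz[OF x] Ga(1)[OF x]] .
      from has_derivative_mult[OF Gb(1)[OF x] has_derivative_power[OF this, of k]]
      show "(g has_derivative G x) (at x)"
        unfolding g by (rule has_derivative_eq_rhs) (cases k, auto simp: G_def fun_eq_iff algebra_simps)
    next
      fix v
      have "smooth_on S (\<lambda>x. - real k * b x * Ga x v)"
        by (intro smooth_on_mult smooth_on_const S b Ga(2))
      then have "P (\<lambda>x. (- real k * b x * Ga x v) * inverse (a x) ^ Suc k)"
        unfolding P_def by blast
      moreover have "P (\<lambda>x. Gb x v * inverse (a x) ^ k)"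
        unfolding P_def using Gb(2) by blast
      ultimately show "\<exists>ks. list_all P ks \<and> (\<forall>x\<in>S. G x v = (\<Sum>k\<leftarrow>ks. k x))"
        by (intro exI[of _ "[\<lambda>x. (- real k * b x * Ga x v) * inverse (a x) ^ Suc k,
                             \<lambda>x. Gb x v * inverse (a x) ^ k]"]) (simp add: G_def)
    qed
  qed
qed

text \<open>Chain rule: the derivative of \<open>c \<cdot> F \<circ> g\<close> in direction \<open>v\<close> is
  \<open>c' v \<cdot> F \<circ> g + \<Sum>\<^sub>i c (g' v \<bullet> i) \<cdot> (\<partial>\<^sub>i F) \<circ> g\<close>, the sum running over a basis; this needs a
  finite-dimensional target of \<open>g\<close>.\<close>

lemma smooth_on_compose:
  fixes g :: "'a::real_normed_vector \<Rightarrow> 'b::euclidean_space" and F :: "'b \<Rightarrow> 'c::real_normed_vector"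
  assumes "smooth_on T F" and g: "smooth_on S g" and gS: "\<And>x. x \<in> S \<Longrightarrow> g x \<in> T"
  shows "smooth_on S (\<lambda>x. F (g x))"
proof -
  have S: "open S"
    using smooth_on_open[OF g] .
  define P where "P h \<longleftrightarrow> (\<exists>c F. smooth_on S c \<and> smooth_on T F \<and> h = (\<lambda>x. c x *\<^sub>R F (g x)))"
    for h :: "'a \<Rightarrow> 'c"
  obtain Gg where Gg: "\<And>x. x \<in> S \<Longrightarrow> (g has_derivative Gg x) (at x)" "\<And>v. smooth_on S (\<lambda>x. Gg x v)"
    using smooth_on_derivative[OF g] by blast
  obtain bs where bs: "set bs = (Basis :: 'b set)" "distinct bs"
    using finite_distinct_list[OF finite_Basis] by blast
  show ?thesis
  proof (rule smooth_on_coinduct_sums[where P=P, OF S])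
    show "P (\<lambda>x. F (g x))"
      unfolding P_def using assms(1) smooth_on_const[OF S, of 1] by (intro exI[of _ "\<lambda>x. 1"] exI[of _ F]) auto
    fix h assume "P h"
    then obtain c F where c: "smooth_on S c" and F: "smooth_on T F" and h: "h = (\<lambda>x. c x *\<^sub>R F (g x))"
      by (auto simp: P_def)
    obtain Gc where Gc: "\<And>x. x \<in> S \<Longrightarrow> (c has_derivative Gc x) (at x)" "\<And>v. smooth_on S (\<lambda>x. Gc x v)"
      using smooth_on_derivative[OF c] by blast
    obtain GF where GF: "\<And>y. y \<in> T \<Longrightarrow> (F has_derivative GF y) (at y)" "\<And>v. smooth_on T (\<lambda>y. GF y v)"
      using smooth_on_derivative[OF F] by blast
    define G where "G x v = c x *\<^sub>R GF (g x) (Gg x v) + Gc x v *\<^sub>R F (g x)" for x v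
    show "derivative_in_sums S P h"
      unfolding derivative_in_sums_def
    proof (intro exI[of _ G] conjI ballI allI)
      fix x assume x: "x \<in> S"
      have "((\<lambda>x. F (g x)) has_derivative (\<lambda>v. GF (g x) (Gg x v))) (at x)"
        using diff_chain_at[OF Gg(1)[OF x] GF(1)[OF gS[OF x]]] by (simp add: o_def)
      from has_derivative_scaleR[OF Gc(1)[OF x] this]
      show "(h has_derivative G x) (at x)"
        unfolding h G_def[abs_def] by simp
    next
      fix v
      define \<phi> where "\<phi> i x = (c x * (Gg x v \<bullet> i)) *\<^sub>R GF (g x) i" for i x
      have "smooth_on S (\<lambda>x. c x * (Gg x v \<bullet> i))" for i
        by (intro smooth_on_mult c smooth_on_bounded_linear[OF bounded_linear_inner_left] Gg(2))
      then have "list_all P (map \<phi> bs @ [\<lambda>x. Gc x v *\<^sub>R F (g x)])"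
        unfolding P_def \<phi>_def using GF(2) Gc(2) F by (auto simp: list_all_iff)
      moreover have "G x v = (\<Sum>k\<leftarrow>map \<phi> bs @ [\<lambda>x. Gc x v *\<^sub>R F (g x)]. k x)" if x: "x \<in> S" for x
      proof -
        have lin: "linear (GF (g x))"
          using GF(1)[OF gS[OF x]] has_derivative_linear by blast
        have "GF (g x) (Gg x v) = GF (g x) (\<Sum>i\<in>Basis. (Gg x v \<bullet> i) *\<^sub>R i)"
          by (simp add: euclidean_representation)
        also have "\<dots> = (\<Sum>i\<in>Basis. (Gg x v \<bullet> i) *\<^sub>R GF (g x) i)"
          by (simp add: linear_sum[OF lin] linear_cmul[OF lin] o_def)
        finally show ?thesis
          using bs by (simp add: G_def \<phi>_def o_def sum_list_distinct_conv_sum_set scaleR_sum_right)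
      qed
      ultimately show "\<exists>ks. list_all P ks \<and> (\<forall>x\<in>S. G x v = (\<Sum>k\<leftarrow>ks. k x))"
        by blast
    qed
  qed
qed

section \<open>Homogeneous diffeomorphisms\<close>

lemma open_punctured: "open punctured"
  by (simp add: punctured_def open_Compl)

lemma mem_punctured [simp]: "x \<in> punctured \<longleftrightarrow> x \<noteq> 0"
  by (simp add: punctured_def)

lemma TCT_smooth_on: "Y \<in> TCT \<Longrightarrow> smooth_on punctured Y"
  by (simp add: TCT_def diffeo_on_def)

lemma TCT_zero: "Y \<in> TCT \<Longrightarrow> Y 0 = 0"
  by (simp add: TCT_def)

lemma TCT_scaleR: "Y \<in> TCT \<Longrightarrow> Y (c *\<^sub>R x) = c *\<^sub>R Y x"
  by (cases "x = 0 \<or> c = 0") (auto simp: TCT_def)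

lemma TCT_bij:
  assumes "Y \<in> TCT"
  shows "bij Y"
proof -
  have "bij_betw Y punctured punctured"
    using assms by (simp add: TCT_def diffeo_on_def)
  then have "bij_betw Y (punctured \<union> {0}) (punctured \<union> {Y 0})"
    by (intro notIn_Un_bij_betw) (simp_all add: TCT_zero[OF assms])
  moreover have "punctured \<union> {0} = UNIV"
    by auto
  ultimately show ?thesis
    using TCT_zero[OF assms] by metis
qed

lemma TCT_eq_zero_iff: "Y \<in> TCT \<Longrightarrow> Y x = 0 \<longleftrightarrow> x = 0"
  by (metis TCT_bij TCT_zero bij_is_inj injD)

text \<open>\<open>inv_into UNIV\<close> is the inverse \<open>inv\<close> of HOL, whose syntax is taken by the group inverse
  of HOL-Algebra.\<close>

lemma TCT_smooth_on_inv:
  assumes "Y \<in> TCT"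
  shows "smooth_on punctured (inv_into UNIV Y)"
proof -
  have bij: "bij_betw Y punctured punctured"
    using assms by (simp add: TCT_def diffeo_on_def)
  have "inv_into punctured Y y = inv_into UNIV Y y" if "y \<noteq> 0" for y
  proof -
    have "Y (inv_into punctured Y y) = y"
      using bij that by (simp add: bij_betw_def f_inv_into_f)
    then show ?thesis
      using TCT_bij[OF assms] by (metis bij_is_inj inv_f_f)
  qed
  moreover have "smooth_on punctured (inv_into punctured Y)"
    using assms by (simp add: TCT_def diffeo_on_def)
  ultimately show ?thesis
    using smooth_on_cong by fastforce
qed

lemma TCT_intro:
  assumes "smooth_on punctured Y" "smooth_on punctured Z"
    and ZY: "\<And>x. Z (Y x) = x" and YZ: "\<And>x. Y (Z x) = x"
    and hom: "\<And>c x. Y (c *\<^sub>R x) = c *\<^sub>R Y x"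
  shows "Y \<in> TCT"
proof -
  have Y0: "Y 0 = 0"
    using hom[of 0] by simp
  then have Z0: "Z 0 = 0"
    using ZY by metis
  have "Y \<in> punctured \<rightarrow> punctured" "Z \<in> punctured \<rightarrow> punctured"
    using ZY YZ Y0 Z0 by (metis Pi_I mem_punctured)+
  then have bij: "bij_betw Y punctured punctured"
    by (intro bij_betwI[where g=Z]) (simp_all add: ZY YZ)
  have "Z y = inv_into punctured Y y" if "y \<noteq> 0" for y
    using bij that Z0 YZ by (metis bij_betw_imp_inj_on inv_into_f_eq mem_punctured)
  then have "smooth_on punctured (inv_into punctured Y)"
    using smooth_on_cong[OF assms(2)] by simp
  then show ?thesis
    using assms(1) bij Y0 hom by (simp add: TCT_def diffeo_on_def)
qed

lemma id_TCT: "id \<in> TCT"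
  by (rule TCT_intro[where Z=id]) (simp_all add: id_def smooth_on_ident open_punctured)

lemma inv_TCT:
  assumes "Y \<in> TCT"
  shows "inv_into UNIV Y \<in> TCT"
proof (rule TCT_intro[where Z=Y])
  have "bij Y"
    using TCT_bij[OF assms] .
  then show "\<And>x. Y (inv_into UNIV Y x) = x" "\<And>x. inv_into UNIV Y (Y x) = x"
    by (simp_all add: bij_is_surj bij_is_inj surj_f_inv_f)
  then show "inv_into UNIV Y (c *\<^sub>R x) = c *\<^sub>R inv_into UNIV Y x" for c x
    using TCT_scaleR[OF assms] by metis
qed (use assms TCT_smooth_on TCT_smooth_on_inv in auto)

lemma TCT_comp:
  fixes Y1 Y2 :: "'a::euclidean_space \<Rightarrow> 'a"
  assumes Y1: "Y1 \<in> TCT" and Y2: "Y2 \<in> TCT"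
  shows "Y1 \<circ> Y2 \<in> TCT"
proof (rule TCT_intro[where Z="inv_into UNIV Y2 \<circ> inv_into UNIV Y1"])
  show "smooth_on punctured (Y1 \<circ> Y2)"
    using smooth_on_compose[OF TCT_smooth_on[OF Y1] TCT_smooth_on[OF Y2]] Y2
    by (simp add: o_def TCT_eq_zero_iff)
  show "smooth_on punctured (inv_into UNIV Y2 \<circ> inv_into UNIV Y1)"
    using smooth_on_compose[OF TCT_smooth_on_inv[OF Y2] TCT_smooth_on_inv[OF Y1]] inv_TCT[OF Y1]
    by (simp add: o_def TCT_eq_zero_iff)
qed (use TCT_bij[OF Y1] TCT_bij[OF Y2] TCT_scaleR[OF Y1] TCT_scaleR[OF Y2]
      in \<open>simp_all add: bij_is_surj bij_is_inj surj_f_inv_f\<close>)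

lemma carrier_TCT_group [simp]: "carrier TCT_group = TCT"
  and mult_TCT_group [simp]: "mult TCT_group = (\<circ>)"
  and one_TCT_group [simp]: "one TCT_group = id"
  by (simp_all add: TCT_group_def)

lemma group_TCT_group: "group (TCT_group :: ('a::euclidean_space \<Rightarrow> 'a) monoid)"
proof (rule groupI)
  fix Y :: "'a \<Rightarrow> 'a" assume Y: "Y \<in> carrier TCT_group"
  then have "inv_into UNIV Y \<circ> Y = id"
    using TCT_bij[of Y] by (simp add: bij_is_inj inv_o_cancel)
  then show "\<exists>Z\<in>carrier TCT_group. Z \<otimes>\<^bsub>TCT_group\<^esub> Y = \<one>\<^bsub>TCT_group\<^esub>"
    using inv_TCT Y by auto
qed (auto simp: TCT_comp id_TCT o_assoc)

lemma TCT_group_inv: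
  fixes Y :: "'a::euclidean_space \<Rightarrow> 'a"
  assumes "Y \<in> TCT"
  shows "inv\<^bsub>TCT_group\<^esub> Y = inv_into UNIV Y"
  using group.inv_equality[OF group_TCT_group, of "inv_into UNIV Y" Y] assms inv_TCT[OF assms]
    TCT_bij[OF assms] by (simp add: bij_is_inj)

section \<open>Radial rescalings\<close>

definition radial_factor :: "('a::real_normed_vector \<Rightarrow> real) \<Rightarrow> bool" where
  "radial_factor r \<longleftrightarrow> smooth_on punctured r \<and> (\<forall>x. x \<noteq> 0 \<longrightarrow> r x > 0) \<and>
     (\<forall>x c. x \<noteq> 0 \<longrightarrow> c \<noteq> 0 \<longrightarrow> r (c *\<^sub>R x) = r x)"

definition radial_scaling :: "('a::real_normed_vector \<Rightarrow> real) \<Rightarrow> 'a \<Rightarrow> 'a" where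
  "radial_scaling r x = r x *\<^sub>R x"

lemma radial_factorD:
  assumes "radial_factor r"
  shows "smooth_on punctured r" "x \<noteq> 0 \<Longrightarrow> r x > 0" "x \<noteq> 0 \<Longrightarrow> c \<noteq> 0 \<Longrightarrow> r (c *\<^sub>R x) = r x"
  using assms by (auto simp: radial_factor_def)

lemma radial_factor_mult:
  assumes "radial_factor r" "radial_factor s"
  shows "radial_factor (\<lambda>x. r x * s x)"
  using assms unfolding radial_factor_def by (auto intro: smooth_on_mult)

lemma radial_factor_inverse:
  assumes "radial_factor r"
  shows "radial_factor (\<lambda>x. inverse (r x))"
proof -
  have "smooth_on punctured (\<lambda>x. inverse (r x))"
    using smooth_on_inverse[OF radial_factorD(1)[OF assms]] radial_factorD(2)[OF assms] by force
  then show ?thesis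
    using assms by (simp add: radial_factor_def)
qed

lemma radial_factor_one: "radial_factor (\<lambda>x. 1)"
  by (simp add: radial_factor_def smooth_on_const open_punctured)

lemma radial_factor_comp_TCT:
  fixes r :: "'a::euclidean_space \<Rightarrow> real"
  assumes r: "radial_factor r" and Y: "Y \<in> TCT"
  shows "radial_factor (\<lambda>x. r (Y x))"
  unfolding radial_factor_def
proof (intro conjI allI impI)
  show "smooth_on punctured (\<lambda>x. r (Y x))"
    using smooth_on_compose[OF radial_factorD(1)[OF r] TCT_smooth_on[OF Y]] TCT_eq_zero_iff[OF Y] by simp
next
  fix x :: 'a assume "x \<noteq> 0"
  then show "r (Y x) > 0"
    using radial_factorD(2)[OF r] TCT_eq_zero_iff[OF Y] by simp
next
  fix x :: 'a and c :: real assume "x \<noteq> 0" "c \<noteq> 0"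
  then show "r (Y (c *\<^sub>R x)) = r (Y x)"
    using radial_factorD(3)[OF r] TCT_eq_zero_iff[OF Y] TCT_scaleR[OF Y] by simp
qed

lemma radial_scaling_comp:
  assumes "\<And>x c. x \<noteq> 0 \<Longrightarrow> c \<noteq> 0 \<Longrightarrow> r (c *\<^sub>R x) = r x"
  shows "radial_scaling r \<circ> radial_scaling s = radial_scaling (\<lambda>x. r x * s x)"
proof
  fix x
  show "(radial_scaling r \<circ> radial_scaling s) x = radial_scaling (\<lambda>x. r x * s x) x"
    using assms[of x "s x"] by (cases "x = 0 \<or> s x = 0") (auto simp: radial_scaling_def)
qed

lemma radial_scaling_one: "radial_scaling (\<lambda>x. 1) = id"
  by (simp add: radial_scaling_def fun_eq_iff)

lemma radial_scaling_inverse: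
  assumes r: "radial_factor r"
  shows "radial_scaling (\<lambda>x. inverse (r x)) \<circ> radial_scaling r = id"
    and "radial_scaling r \<circ> radial_scaling (\<lambda>x. inverse (r x)) = id"
proof -
  have "inverse (r x) * r x = 1" "r x * inverse (r x) = 1" if "x \<noteq> 0" for x
    using radial_factorD(2)[OF r that] by simp_all
  then have "radial_scaling (\<lambda>x. inverse (r x) * r x) = id" "radial_scaling (\<lambda>x. r x * inverse (r x)) = id"
    by (auto simp: radial_scaling_def fun_eq_iff) (metis scale_one scale_zero_right)+
  moreover note radial_scaling_comp[OF radial_factorD(3)[OF radial_factor_inverse[OF r]], of r]
    radial_scaling_comp[OF radial_factorD(3)[OF r], of "\<lambda>x. inverse (r x)"]
  ultimately show "radial_scaling (\<lambda>x. inverse (r x)) \<circ> radial_scaling r = id"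
    and "radial_scaling r \<circ> radial_scaling (\<lambda>x. inverse (r x)) = id"
    by simp_all
qed

lemma radial_scaling_TCT:
  assumes r: "radial_factor r"
  shows "radial_scaling r \<in> TCT"
proof (rule TCT_intro[where Z="radial_scaling (\<lambda>x. inverse (r x))"])
  show "smooth_on punctured (radial_scaling r)"
    "smooth_on punctured (radial_scaling (\<lambda>x. inverse (r x)))"
    unfolding radial_scaling_def
    using r radial_factor_inverse[OF r]
    by (auto intro!: smooth_on_scaleR smooth_on_ident open_punctured dest: radial_factorD(1))
  show "radial_scaling (\<lambda>x. inverse (r x)) (radial_scaling r x) = x"
    "radial_scaling r (radial_scaling (\<lambda>x. inverse (r x)) x) = x" for x
    using radial_scaling_inverse[OF r] by (metis comp_apply id_apply)+
  show "radial_scaling r (c *\<^sub>R x) = c *\<^sub>R radial_scaling r x" for c x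
    using radial_factorD(3)[OF r, of x c] by (cases "x = 0 \<or> c = 0") (auto simp: radial_scaling_def)
qed
lemma TCT_N_iff: "Y \<in> TCT_N \<longleftrightarrow> (\<exists>r. radial_factor r \<and> Y = radial_scaling r)"
proof
  assume "Y \<in> TCT_N"
  then obtain r where Y: "Y \<in> TCT" and r: "radial_factor r" and Yr: "\<forall>x. x \<noteq> 0 \<longrightarrow> Y x = r x *\<^sub>R x"
    unfolding TCT_N_def radial_factor_def by auto
  have "Y = radial_scaling r"
  proof
    fix x
    show "Y x = radial_scaling r x"
      using Yr TCT_zero[OF Y] by (cases "x = 0") (simp_all add: radial_scaling_def)
  qed
  with r show "\<exists>r. radial_factor r \<and> Y = radial_scaling r"
    by blast
next
  assume "\<exists>r. radial_factor r \<and> Y = radial_scaling r"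
  then obtain r where r: "radial_factor r" and Y: "Y = radial_scaling r"
    by blast
  show "Y \<in> TCT_N"
    unfolding TCT_N_def using radial_scaling_TCT[OF r] r
    by (auto simp: Y radial_factor_def radial_scaling_def)
qed

lemma TCT_conj_radial_scaling:
  assumes "Y \<in> TCT"
  shows "Y \<circ> radial_scaling r \<circ> inv_into UNIV Y = radial_scaling (\<lambda>x. r (inv_into UNIV Y x))"
proof
  fix x
  have "Y (inv_into UNIV Y x) = x"
    using TCT_bij[OF assms] by (simp add: bij_is_surj surj_f_inv_f)
  then show "(Y \<circ> radial_scaling r \<circ> inv_into UNIV Y) x = radial_scaling (\<lambda>x. r (inv_into UNIV Y x)) x"
    using TCT_scaleR[OF assms] by (simp add: radial_scaling_def)
qed

lemma subgroup_TCT_N: "subgroup TCT_N (TCT_group :: ('a::euclidean_space \<Rightarrow> 'a) monoid)"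
proof (rule group.subgroupI[OF group_TCT_group])
  show "TCT_N \<subseteq> carrier (TCT_group :: ('a \<Rightarrow> 'a) monoid)"
    by (auto simp: TCT_N_def)
  show "TCT_N \<noteq> ({} :: ('a \<Rightarrow> 'a) set)"
    using radial_factor_one TCT_N_iff by blast
next
  fix Y :: "'a \<Rightarrow> 'a" assume "Y \<in> TCT_N"
  then obtain r where r: "radial_factor r" and Y: "Y = radial_scaling r"
    by (auto simp: TCT_N_iff)
  have "inv\<^bsub>TCT_group\<^esub> Y = radial_scaling (\<lambda>x. inverse (r x))"
    using group.inv_equality[OF group_TCT_group] radial_scaling_inverse(1)[OF r]
      radial_scaling_TCT[OF r] radial_scaling_TCT[OF radial_factor_inverse[OF r]]
    by (simp add: Y)
  then show "inv\<^bsub>TCT_group\<^esub> Y \<in> TCT_N"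
    using radial_factor_inverse[OF r] TCT_N_iff by blast
next
  fix Y1 Y2 :: "'a \<Rightarrow> 'a" assume "Y1 \<in> TCT_N" "Y2 \<in> TCT_N"
  then obtain r1 r2 where r1: "radial_factor r1" and r2: "radial_factor r2"
    and "Y1 = radial_scaling r1" "Y2 = radial_scaling r2"
    by (auto simp: TCT_N_iff)
  then have "Y1 \<otimes>\<^bsub>TCT_group\<^esub> Y2 = radial_scaling (\<lambda>x. r1 x * r2 x)"
    using radial_scaling_comp[OF radial_factorD(3)[OF r1]] by simp
  then show "Y1 \<otimes>\<^bsub>TCT_group\<^esub> Y2 \<in> TCT_N"
    using radial_factor_mult[OF r1 r2] TCT_N_iff by blast
qed

lemma TCT_N_normal: "TCT_N \<lhd> (TCT_group :: ('a::euclidean_space \<Rightarrow> 'a) monoid)"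
  unfolding group.normal_inv_iff[OF group_TCT_group]
proof (intro conjI subgroup_TCT_N ballI)
  fix Y N :: "'a \<Rightarrow> 'a" assume Y: "Y \<in> carrier TCT_group" and "N \<in> TCT_N"
  then obtain r where r: "radial_factor r" and N: "N = radial_scaling r"
    by (auto simp: TCT_N_iff)
  have "Y \<otimes>\<^bsub>TCT_group\<^esub> N \<otimes>\<^bsub>TCT_group\<^esub> inv\<^bsub>TCT_group\<^esub> Y = radial_scaling (\<lambda>x. r (inv_into UNIV Y x))"
    using Y TCT_group_inv[of Y] TCT_conj_radial_scaling[of Y r] by (simp add: N)
  then show "Y \<otimes>\<^bsub>TCT_group\<^esub> N \<otimes>\<^bsub>TCT_group\<^esub> inv\<^bsub>TCT_group\<^esub> Y \<in> TCT_N"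
    using radial_factor_comp_TCT[OF r inv_TCT] Y TCT_N_iff by auto
qed

lemma comm_group_TCT_N: "comm_group ((TCT_group :: ('a::euclidean_space \<Rightarrow> 'a) monoid)\<lparr>carrier := TCT_N\<rparr>)"
proof (rule group.group_comm_groupI)
  show "group ((TCT_group :: ('a \<Rightarrow> 'a) monoid)\<lparr>carrier := TCT_N\<rparr>)"
    using subgroup.subgroup_is_group[OF subgroup_TCT_N group_TCT_group] .
next
  fix Y1 Y2 :: "'a \<Rightarrow> 'a"
  assume "Y1 \<in> carrier (TCT_group\<lparr>carrier := TCT_N\<rparr>)" "Y2 \<in> carrier (TCT_group\<lparr>carrier := TCT_N\<rparr>)"
  then obtain r1 r2 where r1: "radial_factor r1" and r2: "radial_factor r2"
    and "Y1 = radial_scaling r1" "Y2 = radial_scaling r2"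
    by (auto simp: TCT_N_iff)
  then show "Y1 \<otimes>\<^bsub>TCT_group\<lparr>carrier := TCT_N\<rparr>\<^esub> Y2 = Y2 \<otimes>\<^bsub>TCT_group\<lparr>carrier := TCT_N\<rparr>\<^esub> Y1"
    using radial_scaling_comp[OF radial_factorD(3)[OF r1]] radial_scaling_comp[OF radial_factorD(3)[OF r2]]
    by (simp add: mult.commute)
qed

section \<open>Norm-preserving maps and the decomposition\<close>

lemma is_norm_scaleR: "is_norm nrm \<Longrightarrow> nrm (c *\<^sub>R x) = \<bar>c\<bar> * nrm x"
  by (simp add: is_norm_def)

lemma is_norm_pos:
  assumes "is_norm nrm" "x \<noteq> 0"
  shows "nrm x > 0"
proof -
  have "0 = nrm (x + (- 1) *\<^sub>R x)"
    using assms(1) by (simp add: is_norm_def)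
  also have "\<dots> \<le> nrm x + nrm ((- 1) *\<^sub>R x)"
    using assms(1) unfolding is_norm_def by blast
  also have "\<dots> = 2 * nrm x"
    using is_norm_scaleR[OF assms(1), of "- 1" x] by simp
  moreover have "nrm x \<noteq> 0"
    using assms unfolding is_norm_def by blast
  ultimately show ?thesis
    by linarith
qed

lemma TCT_H_iff: "Y \<in> TCT_H nrm \<longleftrightarrow> Y \<in> TCT \<and> (\<forall>x. nrm (Y x) = nrm x)"
  using TCT_scaleR[of Y "- 1"] TCT_zero[of Y] by (auto simp: TCT_H_def) metis

lemma subgroup_TCT_H: "subgroup (TCT_H nrm) (TCT_group :: ('a::euclidean_space \<Rightarrow> 'a) monoid)"
proof (rule group.subgroupI[OF group_TCT_group])
  show "TCT_H nrm \<subseteq> carrier (TCT_group :: ('a \<Rightarrow> 'a) monoid)"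
    by (auto simp: TCT_H_def)
  show "TCT_H nrm \<noteq> ({} :: ('a \<Rightarrow> 'a) set)"
    using id_TCT TCT_H_iff[of id nrm] by auto
next
  fix Y :: "'a \<Rightarrow> 'a" assume "Y \<in> TCT_H nrm"
  then have Y: "Y \<in> TCT" and "\<And>x. nrm (Y x) = nrm x"
    by (auto simp: TCT_H_iff)
  then have "nrm (inv_into UNIV Y x) = nrm x" for x
    using TCT_bij[OF Y] by (metis bij_is_surj surj_f_inv_f)
  then show "inv\<^bsub>TCT_group\<^esub> Y \<in> TCT_H nrm"
    using TCT_group_inv[OF Y] inv_TCT[OF Y] by (simp add: TCT_H_iff)
next
  fix Y1 Y2 :: "'a \<Rightarrow> 'a" assume "Y1 \<in> TCT_H nrm" "Y2 \<in> TCT_H nrm"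
  then show "Y1 \<otimes>\<^bsub>TCT_group\<^esub> Y2 \<in> TCT_H nrm"
    by (simp add: TCT_H_iff TCT_comp)
qed

lemma TCT_N_Int_TCT_H:
  assumes nrm: "is_norm nrm"
  shows "TCT_N \<inter> TCT_H nrm = {id}"
proof
  have "id \<in> TCT_N"
    using radial_factor_one radial_scaling_one TCT_N_iff by metis
  moreover have "id \<in> TCT_H nrm"
    using id_TCT by (simp add: TCT_H_iff)
  ultimately show "{id} \<subseteq> TCT_N \<inter> TCT_H nrm"
    by simp
next
  show "TCT_N \<inter> TCT_H nrm \<subseteq> {id}"
  proof
    fix Y assume Y: "Y \<in> TCT_N \<inter> TCT_H nrm"
    then obtain r where r: "radial_factor r" and Yr: "Y = radial_scaling r"
      by (auto simp: TCT_N_iff)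
    have "Y x = x" for x
    proof (cases "x = 0")
      case False
      have "r x * nrm x = nrm x"
        using Y radial_factorD(2)[OF r False] is_norm_scaleR[OF nrm, of "r x" x]
        by (simp add: TCT_H_iff Yr radial_scaling_def)
      then have "r x = 1"
        using is_norm_pos[OF nrm False] by simp
      then show ?thesis
        by (simp add: Yr radial_scaling_def)
    qed (simp add: Yr radial_scaling_def)
    then show "Y \<in> {id}"
      by (auto simp: fun_eq_iff)
  qed
qed

text \<open>Every \<open>Y\<close> factors as \<open>Y = n \<circ> h\<close>: rescaling \<open>Y x\<close> radially to the norm of \<open>x\<close> gives
  \<open>h\<close>, i.e. \<open>h = radial_scaling \<tau> \<circ> Y\<close> with \<open>\<tau> y = \<parallel>Y\<^sup>-\<^sup>1 y\<parallel> / \<parallel>y\<parallel>\<close>, and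
  \<open>n = radial_scaling (1 / \<tau>)\<close>.\<close>

lemma TCT_N_set_mult_TCT_H:
  fixes nrm :: "'a::euclidean_space \<Rightarrow> real"
  assumes nrm: "is_norm nrm" and smooth: "smooth_on punctured nrm"
  shows "TCT_N <#>\<^bsub>TCT_group\<^esub> TCT_H nrm = TCT"
proof
  show "TCT_N <#>\<^bsub>TCT_group\<^esub> TCT_H nrm \<subseteq> TCT"
    unfolding set_mult_def by (auto simp: TCT_N_def TCT_H_def TCT_comp)
next
  show "TCT \<subseteq> TCT_N <#>\<^bsub>TCT_group\<^esub> TCT_H nrm"
  proof
    fix Y :: "'a \<Rightarrow> 'a" assume Y: "Y \<in> TCT"
    define \<tau> where "\<tau> y = nrm (inv_into UNIV Y y) * inverse (nrm y)" for y
    have Y': "inv_into UNIV Y \<in> TCT"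
      using inv_TCT[OF Y] .
    have \<tau>: "radial_factor \<tau>"
      unfolding radial_factor_def
    proof (intro conjI allI impI)
      have "smooth_on punctured (\<lambda>y. nrm (inv_into UNIV Y y))"
        using smooth_on_compose[OF smooth TCT_smooth_on[OF Y']] TCT_eq_zero_iff[OF Y'] by simp
      moreover have "smooth_on punctured (\<lambda>y. inverse (nrm y))"
        using smooth_on_inverse[OF smooth] is_norm_pos[OF nrm] by force
      ultimately show "smooth_on punctured \<tau>"
        unfolding \<tau>_def by (rule smooth_on_mult)
    next
      fix y :: 'a assume "y \<noteq> 0"
      then show "\<tau> y > 0"
        using is_norm_pos[OF nrm] TCT_eq_zero_iff[OF Y'] by (simp add: \<tau>_def)
    next
      fix y :: 'a and c :: real assume "y \<noteq> 0" "c \<noteq> 0"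
      then show "\<tau> (c *\<^sub>R y) = \<tau> y"
        using TCT_scaleR[OF Y'] is_norm_scaleR[OF nrm] by (simp add: \<tau>_def)
    qed
    define h where "h = radial_scaling \<tau> \<circ> Y"
    have "nrm (h x) = nrm x" for x
    proof (cases "x = 0")
      case False
      then have "Y x \<noteq> 0"
        using TCT_eq_zero_iff[OF Y] by simp
      moreover have "inv_into UNIV Y (Y x) = x"
        using TCT_bij[OF Y] by (simp add: bij_is_inj)
      ultimately show ?thesis
        using is_norm_pos[OF nrm, of x] is_norm_pos[OF nrm, of "Y x"] is_norm_scaleR[OF nrm] False
        by (simp add: h_def radial_scaling_def \<tau>_def abs_mult)
    qed (simp add: h_def radial_scaling_def TCT_zero[OF Y])
    then have "h \<in> TCT_H nrm"
      using TCT_comp[OF radial_scaling_TCT[OF \<tau>] Y] by (simp add: TCT_H_iff h_def)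
    moreover have "Y = radial_scaling (\<lambda>y. inverse (\<tau> y)) \<circ> h"
      using radial_scaling_inverse(1)[OF \<tau>] by (simp add: h_def o_assoc)
    moreover have "radial_scaling (\<lambda>y. inverse (\<tau> y)) \<in> TCT_N"
      using radial_factor_inverse[OF \<tau>] by (auto simp: TCT_N_iff)
    ultimately show "Y \<in> TCT_N <#>\<^bsub>TCT_group\<^esub> TCT_H nrm"
      unfolding set_mult_def by auto
  qed
qed

theorem theorem2:
  fixes nrm :: "real ^ 'n \<Rightarrow> real"
  assumes "is_norm nrm"
    and "smooth_on punctured nrm"
  shows "group (TCT_group :: (real ^ 'n \<Rightarrow> real ^ 'n) monoid)
       \<and> TCT_N \<lhd> (TCT_group :: (real ^ 'n \<Rightarrow> real ^ 'n) monoid)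
       \<and> comm_group ((TCT_group :: (real ^ 'n \<Rightarrow> real ^ 'n) monoid)\<lparr>carrier := TCT_N\<rparr>)
       \<and> subgroup (TCT_H nrm) (TCT_group :: (real ^ 'n \<Rightarrow> real ^ 'n) monoid)
       \<and> TCT_N \<inter> TCT_H nrm = {\<one>\<^bsub>(TCT_group :: (real ^ 'n \<Rightarrow> real ^ 'n) monoid)\<^esub>}
       \<and> TCT_N <#>\<^bsub>(TCT_group :: (real ^ 'n \<Rightarrow> real ^ 'n) monoid)\<^esub> TCT_H nrm
           = carrier (TCT_group :: (real ^ 'n \<Rightarrow> real ^ 'n) monoid)"
  using group_TCT_group TCT_N_normal comm_group_TCT_N subgroup_TCT_H[of nrm]
    TCT_N_Int_TCT_H[OF assms(1)] TCT_N_set_mult_TCT_H[OF assms] by simp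

end
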